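(* Let $\eta>0$, $\widetilde{x}_1\in C$, and let $(\widehat{x}_t^* )_{t\ge 1}$ be an arbitrary sequence in $H$. Run Optimistic Greedy Projection (OGP): for $t=1,2,\dots$, $$\widetilde{x}_{t+1}=P_C(\widetilde{x}_t-\eta x_t^* ),\quad x_t^*\in\partial\varphi_t(x_t),\qquad x_{t+1}=P_C(\widetilde{x}_{t+1}-\eta\widehat{x}_{t+1}^* ),$$ where $x_1\in C$ is the initial played point ($x_1=P_C(\widetilde x_1-\eta\widehat x_1^* )$). Then for every $T\ge1$ and every reference sequence $z_1,\dots,z_T\in C$, $$\sum_{t=1}^T\varphi_t(x_t)-\sum_{t=1}^T\varphi_t(z_t)\le \frac{\rho^2}{2\eta}+\frac{\rho}{\eta}\sum_{t=2}^T\|z_t-z_{t-1}\|+\frac{\eta}{2}\sum_{t=1}^T\|x_t^*-\widehat{x}_t^*\|^2-\frac{1}{2\eta}\sum_{t=1}^T\|x_t-\widetilde{x}_t\|^2 .$$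
   Context: $H$ is a real Hilbert space with inner product $\langle\cdot,\cdot\rangle$; $C\subset H$ is nonempty, closed and convex with diameter $\rho=\sup_{x,y\in C}\|x-y\|<\infty$; $P_C$ denotes the metric projection onto $C$. For each round $t$, $\varphi_t:H\to(-\infty,+\infty]$ is a convex function with $C\subset\operatorname{dom}\partial\varphi_t$ (the loss chosen by an adversary, possibly depending on past play), and $\partial$ denotes the subdifferential. *)

theory Defs
  imports "HOL-Analysis.Analysis"
begin

text \<open>Metric projection onto C in a (possibly infinite-dimensional) real inner product
  space: a nearest point of C to a.  (The library's closest_point is restricted
  to heine_borel spaces, so we use the same definition for real_inner.)\<close>
definition metric_proj :: "'a::real_inner set \<Rightarrow> 'a \<Rightarrow> 'a" where
  "metric_proj C a = (SOME p. p \<in> C \<and> (\<forall>y\<in>C. dist a p \<le> dist a y))"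

definition ext_convex :: "('a::real_vector \<Rightarrow> ereal) \<Rightarrow> bool" where
  "ext_convex f \<longleftrightarrow> (\<forall>x. f x \<noteq> -\<infinity>) \<and>
     (\<forall>x y. \<forall>u::real. 0 < u \<and> u < 1 \<longrightarrow>
        f ((1 - u) *\<^sub>R x + u *\<^sub>R y) \<le> ereal (1 - u) * f x + ereal u * f y)"

definition subdiff :: "('a::real_inner \<Rightarrow> ereal) \<Rightarrow> 'a \<Rightarrow> 'a set" where
  "subdiff f x = {u. f x \<noteq> \<infinity> \<and> f x \<noteq> -\<infinity> \<and>
                     (\<forall>y. f x + ereal (inner u (y - x)) \<le> f y)}"

end

theory Submission imports Defs begin

text \<open>The metric projection onto a nonempty closed convex subset of a Hilbert space exists,
  because a minimizing sequence for the distance is Cauchy by the parallelogram law, and it is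
  characterized by the variational inequality (a - P a, u - P a) \<le> 0.  By the subgradient
  inequality the regret is at most the linearized regret \<Sum> (g t, x t - z t).  In round t the
  variational inequalities of the two projections, expanded with the three-point identity, bound
  \<eta> (g t, x t - z t) by half the drop of the squared distance to z t from xt t to xt (t + 1),
  plus \<eta>^2/2 |g t - xh t|^2, minus |x t - xt t|^2/2; the cross term
  \<eta> (g t - xh t, x t - xt (t + 1)) is absorbed by Young's inequality.  Summing over t, the
  squared distances telescope except where the comparator moves, and replacing z (t - 1) by z t
  costs at most 2 \<rho> |z t - z (t - 1)|, where \<rho> = diameter C.\<close>

lemma parallelogram_law_midpoint:
  fixes u v :: "'a::real_inner"
  shows "(norm (u - v))\<^sup>2 = 2 * (norm u)\<^sup>2 + 2 * (norm v)\<^sup>2 - 4 * (norm (midpoint u v))\<^sup>2"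
  by (simp add: midpoint_def power2_norm_eq_inner inner_diff inner_add algebra_simps inner_commute)

lemma midpoint_in_convex:
  assumes "convex C" "a \<in> C" "b \<in> C"
  shows "midpoint a b \<in> C"
  using convexD[OF assms, of "1/2" "1/2"] by (simp add: midpoint_def scaleR_add_right)

lemma diff_midpoint: "a - midpoint u v = midpoint (a - u) (a - v)"
proof -
  have "(a - u) + (a - v) = (a + a) - (midpoint u v + midpoint u v)"
    unfolding midpoint_plus_self by (simp add: algebra_simps)
  also have "\<dots> = (a - midpoint u v) + (a - midpoint u v)"
    by (simp add: algebra_simps)
  finally show ?thesis
    by (metis midpoint_eq_iff)
qed

lemma norm_diff_sq_le_convex:
  fixes C :: "'a::real_inner set"
  assumes "convex C" "u \<in> C" "v \<in> C"
  shows "(norm (u - v))\<^sup>2 \<le> 2 * (dist a u)\<^sup>2 + 2 * (dist a v)\<^sup>2 - 4 * (infdist a C)\<^sup>2"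
proof -
  have "infdist a C \<le> norm (midpoint (a - u) (a - v))"
    using infdist_le[OF midpoint_in_convex[OF assms]] by (simp add: dist_norm diff_midpoint)
  then have "(infdist a C)\<^sup>2 \<le> (norm (midpoint (a - u) (a - v)))\<^sup>2"
    using infdist_nonneg by (rule power_mono)
  moreover have "u - v = (a - v) - (a - u)" by simp
  ultimately show ?thesis
    using parallelogram_law_midpoint[of "a - v" "a - u"]
    by (simp add: dist_norm midpoint_sym norm_minus_commute)
qed

lemma infdist_sq_approx:
  fixes C :: "'a::metric_space set"
  assumes "C \<noteq> {}" "e > 0"
  shows "\<exists>y\<in>C. (dist a y)\<^sup>2 < (infdist a C)\<^sup>2 + e"
proof -
  let ?d = "infdist a C"
  have "?d < sqrt (?d\<^sup>2 + e)"
    using assms(2) infdist_nonneg[of a C] by (simp add: real_less_rsqrt)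
  then obtain y where y: "y \<in> C" "dist a y < sqrt (?d\<^sup>2 + e)"
    using assms(1) unfolding infdist_notempty[OF assms(1)]
    by (subst (asm) cINF_less_iff) (auto intro: bdd_belowI[where m=0])
  have "(dist a y)\<^sup>2 < (sqrt (?d\<^sup>2 + e))\<^sup>2"
    using y(2) by (intro power_strict_mono) auto
  with y(1) assms(2) show ?thesis by auto
qed

lemma nearest_point_exists:
  fixes C :: "'a::{real_inner,complete_space} set"
  assumes "C \<noteq> {}" "closed C" "convex C"
  shows "\<exists>p\<in>C. \<forall>y\<in>C. dist a p \<le> dist a y"
proof -
  let ?d = "infdist a C"
  have "\<forall>n. \<exists>y\<in>C. (dist a y)\<^sup>2 < ?d\<^sup>2 + 1 / real (Suc n)"
    using infdist_sq_approx[OF assms(1)] by simp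
  then obtain c where c: "\<And>n. c n \<in> C" "\<And>n. (dist a (c n))\<^sup>2 < ?d\<^sup>2 + 1 / real (Suc n)"
    by metis
  have "Cauchy c"
  proof (rule CauchyI)
    fix e :: real assume e: "e > 0"
    obtain M :: nat where M: "4 / e\<^sup>2 < real M" using reals_Archimedean2 by blast
    have small: "2 / real (Suc n) < e\<^sup>2 / 2" if "M \<le> n" for n
    proof -
      have "4 / e\<^sup>2 < real (Suc n)" using M that by simp
      thus ?thesis using e by (simp add: field_simps)
    qed
    have "norm (c m - c n) < e" if "M \<le> m" "M \<le> n" for m n
    proof -
      have "(norm (c m - c n))\<^sup>2 < e\<^sup>2"
        using norm_diff_sq_le_convex[OF assms(3) c(1)[of m] c(1)[of n], of a] c(2)[of m] c(2)[of n]
          small[OF that(1)] small[OF that(2)] by simp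
      thus ?thesis using e by (simp add: power_less_imp_less_base)
    qed
    then show "\<exists>M. \<forall>m\<ge>M. \<forall>n\<ge>M. norm (c m - c n) < e" by blast
  qed
  then obtain p where p: "c \<longlonglongrightarrow> p" using convergent_eq_Cauchy by blast
  have "p \<in> C" using closed_sequentially[OF assms(2)] c(1) p by blast
  have "(\<lambda>n. (dist a (c n))\<^sup>2) \<longlonglongrightarrow> (dist a p)\<^sup>2"
    by (intro tendsto_intros p)
  moreover have "(\<lambda>n. ?d\<^sup>2 + 1 / real (Suc n)) \<longlonglongrightarrow> ?d\<^sup>2 + 0"
    by (intro tendsto_intros LIMSEQ_inverse_real_of_nat[unfolded inverse_eq_divide])
  ultimately have "(dist a p)\<^sup>2 \<le> ?d\<^sup>2"
    using c(2) by (simp add: LIMSEQ_le less_imp_le)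
  hence "dist a p \<le> ?d"
    using infdist_nonneg[of a C] by (simp add: power2_le_iff_abs_le)
  with \<open>p \<in> C\<close> show ?thesis by (meson infdist_le order_trans)
qed

lemma nearest_point_convex_variational_ineq:
  fixes C :: "'a::real_inner set"
  assumes "convex C" "p \<in> C" "\<And>y. y \<in> C \<Longrightarrow> dist a p \<le> dist a y" "u \<in> C"
  shows "inner (a - p) (u - p) \<le> 0"
proof (rule ccontr)
  let ?s = "inner (a - p) (u - p)" and ?N = "(norm (u - p))\<^sup>2"
  assume "\<not> ?s \<le> 0"
  then have s: "?s > 0" by simp
  then have N: "?N > 0" by auto
  define t where "t = min 1 (?s / ?N)"
  have t: "0 < t" "t \<le> 1" "t * ?N \<le> ?s"
    using s N by (auto simp: t_def min_def field_simps)
  have "p + t *\<^sub>R (u - p) = (1 - t) *\<^sub>R p + t *\<^sub>R u"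
    by (simp add: algebra_simps)
  also have "\<dots> \<in> C"
    using convexD[OF assms(1,2,4)] t by simp
  finally have "dist a p \<le> dist a (p + t *\<^sub>R (u - p))" by (rule assms(3))
  then have "(norm (a - p))\<^sup>2 \<le> (norm ((a - p) - t *\<^sub>R (u - p)))\<^sup>2"
    by (simp add: dist_norm power_mono algebra_simps)
  also have "\<dots> = (norm (a - p))\<^sup>2 - 2 * t * ?s + t * (t * ?N)"
    by (simp add: power2_norm_eq_inner inner_diff_left inner_diff_right inner_commute algebra_simps)
  finally have "2 * ?s \<le> t * ?N"
    using t(1) by (simp add: mult.assoc)
  with t(3) s show False by simp
qed

lemma
  fixes C :: "'a::{real_inner,complete_space} set"
  assumes "C \<noteq> {}" "closed C" "convex C"
  shows metric_proj_in: "metric_proj C a \<in> C"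
    and metric_proj_variational_ineq:
      "u \<in> C \<Longrightarrow> inner (a - metric_proj C a) (u - metric_proj C a) \<le> 0"
proof -
  have nearest: "metric_proj C a \<in> C \<and> (\<forall>y\<in>C. dist a (metric_proj C a) \<le> dist a y)"
    unfolding metric_proj_def using nearest_point_exists[OF assms, of a]
    unfolding Bex_def by (rule someI_ex)
  then show "metric_proj C a \<in> C" ..
  show "inner (a - metric_proj C a) (u - metric_proj C a) \<le> 0" if "u \<in> C"
    using nearest assms(3) that by (blast intro: nearest_point_convex_variational_ineq)
qed

lemma inner_three_point:
  fixes a b c :: "'a::real_inner"
  shows "inner (a - b) (b - c) = ((norm (a - c))\<^sup>2 - (norm (a - b))\<^sup>2 - (norm (b - c))\<^sup>2) / 2"
  using dot_norm[of "a - b" "b - c"] by simp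

lemma inner_le_young:
  fixes u v :: "'a::real_inner"
  shows "\<eta> * inner u v \<le> \<eta>\<^sup>2 / 2 * (norm u)\<^sup>2 + (norm v)\<^sup>2 / 2"
proof -
  have "2 * (\<eta> * inner u v) + (norm (\<eta> *\<^sub>R u - v))\<^sup>2 = \<eta>\<^sup>2 * (norm u)\<^sup>2 + (norm v)\<^sup>2"
    using dot_norm_neg[of "\<eta> *\<^sub>R u" v] by (simp add: field_simps power_mult_distrib)
  then show ?thesis
    using zero_le_power2[of "norm (\<eta> *\<^sub>R u - v)"] by linarith
qed

lemma optimistic_step_ineq:
  fixes y y' x z g m :: "'a::real_inner"
  assumes "inner ((y - \<eta> *\<^sub>R g) - y') (z - y') \<le> 0"
    and "inner ((y - \<eta> *\<^sub>R m) - x) (y' - x) \<le> 0"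
  shows "\<eta> * inner g (x - z) \<le> ((norm (y - z))\<^sup>2 - (norm (y' - z))\<^sup>2) / 2
           + \<eta>\<^sup>2 / 2 * (norm (g - m))\<^sup>2 - (norm (x - y))\<^sup>2 / 2"
proof -
  have g_step: "\<eta> * inner g (y' - z) \<le> inner (y - y') (y' - z)"
    using assms(1) by (simp add: inner_diff_left inner_diff_right algebra_simps)
  have m_step: "\<eta> * inner m (x - y') \<le> inner (y - x) (x - y')"
    using assms(2) by (simp add: inner_diff_left inner_diff_right algebra_simps)
  have "\<eta> * inner g (x - z)
      = \<eta> * inner g (y' - z) + \<eta> * inner (g - m) (x - y') + \<eta> * inner m (x - y')"
    by (simp add: inner_diff_left inner_diff_right algebra_simps)
  also have "\<dots> \<le> inner (y - y') (y' - z) + (\<eta>\<^sup>2 / 2 * (norm (g - m))\<^sup>2 + (norm (x - y'))\<^sup>2 / 2)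
      + inner (y - x) (x - y')"
    using g_step m_step inner_le_young[of \<eta> "g - m" "x - y'"] by linarith
  also have "\<dots> = ((norm (y - z))\<^sup>2 - (norm (y' - z))\<^sup>2) / 2
           + \<eta>\<^sup>2 / 2 * (norm (g - m))\<^sup>2 - (norm (x - y))\<^sup>2 / 2"
    unfolding inner_three_point by (simp add: norm_minus_commute field_simps)
  finally show ?thesis .
qed

lemma norm_sq_diff_le_diameter:
  fixes C :: "'a::real_normed_vector set"
  assumes "bounded C" "y \<in> C" "u \<in> C" "v \<in> C"
  shows "(norm (y - u))\<^sup>2 - (norm (y - v))\<^sup>2 \<le> 2 * diameter C * norm (u - v)"
proof -
  have bound: "norm (y - w) \<le> diameter C" if "w \<in> C" for w
    using diameter_bounded_bound[OF assms(1,2) that] by (simp add: dist_norm)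
  have "norm (y - u) - norm (y - v) \<le> norm ((y - v) - (y - u))"
    by (metis norm_minus_commute norm_triangle_ineq2)
  also have "\<dots> = norm (u - v)" by (simp add: norm_minus_commute)
  finally have "(norm (y - u) - norm (y - v)) * (norm (y - u) + norm (y - v))
      \<le> norm (u - v) * (2 * diameter C)"
    using bound[OF assms(3)] bound[OF assms(4)]
    by (cases "norm (y - u) \<le> norm (y - v)")
      (auto intro: mult_mono order_trans[OF mult_nonpos_nonneg])
  then show ?thesis
    by (simp add: power2_eq_square algebra_simps)
qed

lemma sum_moving_comparator_telescope:
  fixes y z :: "nat \<Rightarrow> 'a::real_normed_vector"
  assumes "bounded C"
    and "\<And>t. 1 \<le> t \<Longrightarrow> t \<le> Suc T \<Longrightarrow> y t \<in> C"
    and "\<And>t. 1 \<le> t \<Longrightarrow> t \<le> T \<Longrightarrow> z t \<in> C"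
  shows "(\<Sum>t=1..T. (norm (y t - z t))\<^sup>2 - (norm (y (Suc t) - z t))\<^sup>2)
    \<le> (diameter C)\<^sup>2 + 2 * diameter C * (\<Sum>t=2..T. norm (z t - z (t - 1)))"
proof (cases "T = 0")
  case False
  have "(\<Sum>t=1..n. (norm (y t - z t))\<^sup>2 - (norm (y (Suc t) - z t))\<^sup>2) + (norm (y (Suc n) - z n))\<^sup>2
      \<le> (diameter C)\<^sup>2 + 2 * diameter C * (\<Sum>t=2..n. norm (z t - z (t - 1)))"
    if "1 \<le> n" "n \<le> T" for n
    using that
  proof (induction n rule: dec_induct)
    case base
    have "norm (y 1 - z 1) \<le> diameter C"
      using diameter_bounded_bound[OF assms(1)] assms(2)[of 1] assms(3)[of 1] base
      by (simp add: dist_norm)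
    then show ?case by (simp add: power_mono)
  next
    case (step n)
    have "(norm (y (Suc n) - z (Suc n)))\<^sup>2 - (norm (y (Suc n) - z n))\<^sup>2
        \<le> 2 * diameter C * norm (z (Suc n) - z n)"
      using step by (intro norm_sq_diff_le_diameter assms) auto
    with step show ?case by (simp add: algebra_simps)
  qed
  from this[of T] False zero_le_power2[of "norm (y (Suc T) - z T)"] show ?thesis by linarith
qed simp

lemma sum_le_of_projected_steps:
  fixes y z :: "nat \<Rightarrow> 'a::real_normed_vector" and g e d :: "nat \<Rightarrow> real"
  assumes "\<eta> > 0" "bounded C"
    and "\<And>t. 1 \<le> t \<Longrightarrow> t \<le> Suc T \<Longrightarrow> y t \<in> C"
    and "\<And>t. 1 \<le> t \<Longrightarrow> t \<le> T \<Longrightarrow> z t \<in> C"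
    and step: "\<And>t. 1 \<le> t \<Longrightarrow> t \<le> T \<Longrightarrow>
      \<eta> * g t \<le> ((norm (y t - z t))\<^sup>2 - (norm (y (Suc t) - z t))\<^sup>2) / 2 + \<eta>\<^sup>2 / 2 * e t - d t / 2"
  shows "(\<Sum>t=1..T. g t) \<le> diameter C ^ 2 / (2 * \<eta>)
      + diameter C / \<eta> * (\<Sum>t=2..T. norm (z t - z (t - 1)))
      + \<eta> / 2 * (\<Sum>t=1..T. e t) - 1 / (2 * \<eta>) * (\<Sum>t=1..T. d t)"
proof -
  have "\<eta> * (\<Sum>t=1..T. g t) \<le> (\<Sum>t=1..T. ((norm (y t - z t))\<^sup>2 - (norm (y (Suc t) - z t))\<^sup>2) / 2
      + \<eta>\<^sup>2 / 2 * e t - d t / 2)"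
    unfolding sum_distrib_left by (rule sum_mono) (use step in auto)
  also have "\<dots> = (\<Sum>t=1..T. (norm (y t - z t))\<^sup>2 - (norm (y (Suc t) - z t))\<^sup>2) / 2
      + \<eta>\<^sup>2 / 2 * (\<Sum>t=1..T. e t) - (\<Sum>t=1..T. d t) / 2"
    by (simp add: sum.distrib sum_subtractf sum_distrib_left flip: sum_divide_distrib)
  also have "\<dots> \<le> ((diameter C)\<^sup>2 + 2 * diameter C * (\<Sum>t=2..T. norm (z t - z (t - 1)))) / 2
      + \<eta>\<^sup>2 / 2 * (\<Sum>t=1..T. e t) - (\<Sum>t=1..T. d t) / 2"
    using sum_moving_comparator_telescope[OF assms(2-4)] by simp
  finally have "(\<Sum>t=1..T. g t) \<le> (((diameter C)\<^sup>2 + 2 * diameter C * (\<Sum>t=2..T. norm (z t - z (t - 1)))) / 2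
      + \<eta>\<^sup>2 / 2 * (\<Sum>t=1..T. e t) - (\<Sum>t=1..T. d t) / 2) / \<eta>"
    using assms(1) by (simp add: pos_le_divide_eq mult.commute)
  also have "\<dots> = diameter C ^ 2 / (2 * \<eta>)
      + diameter C / \<eta> * (\<Sum>t=2..T. norm (z t - z (t - 1)))
      + \<eta> / 2 * (\<Sum>t=1..T. e t) - 1 / (2 * \<eta>) * (\<Sum>t=1..T. d t)"
    using assms(1) by (simp add: field_simps power2_eq_square)
  finally show ?thesis .
qed

lemma sum_subdiff_linearization:
  assumes "finite I" "\<And>t. t \<in> I \<Longrightarrow> g t \<in> subdiff (f t) (x t)"
  shows "(\<Sum>t\<in>I. f t (x t)) - (\<Sum>t\<in>I. f t (z t)) \<le> ereal (\<Sum>t\<in>I. inner (g t) (x t - z t))"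
proof -
  define a where "a t = real_of_ereal (f t (x t))" for t
  have fin: "f t (x t) = ereal (a t)"
    and sub: "f t (x t) + ereal (inner (g t) (z t - x t)) \<le> f t (z t)" if "t \<in> I" for t
    using assms(2)[OF that] unfolding subdiff_def a_def by (auto simp: ereal_real)
  have "(\<Sum>t\<in>I. f t (x t)) - (\<Sum>t\<in>I. f t (z t))
      \<le> ereal (\<Sum>t\<in>I. a t) - (\<Sum>t\<in>I. ereal (a t + inner (g t) (z t - x t)))"
    using fin sub by (intro ereal_minus_mono sum_mono) (auto simp flip: plus_ereal.simps)
  also have "\<dots> = ereal (\<Sum>t\<in>I. inner (g t) (x t - z t))"
    by (simp add: sum.distrib inner_diff_right sum_subtractf)
  finally show ?thesis .
qed

theorem lemma1:
  fixes C :: "'a::{real_inner, complete_space} set"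
    and \<phi> :: "nat \<Rightarrow> 'a \<Rightarrow> ereal"
    and \<eta> :: real
    and xt x xs xh :: "nat \<Rightarrow> 'a"
    and z :: "nat \<Rightarrow> 'a"
    and T :: nat
  assumes "C \<noteq> {}" "closed C" "convex C" "bounded C"
    and "\<And>t. t \<ge> 1 \<Longrightarrow> ext_convex (\<phi> t)"
    and "\<And>t y. t \<ge> 1 \<Longrightarrow> y \<in> C \<Longrightarrow> subdiff (\<phi> t) y \<noteq> {}"
    and "\<eta> > 0"
    and "xt 1 \<in> C"
    and "\<And>t. t \<ge> 1 \<Longrightarrow> xs t \<in> subdiff (\<phi> t) (x t)"
    and "\<And>t. t \<ge> 1 \<Longrightarrow> xt (t + 1) = metric_proj C (xt t - \<eta> *\<^sub>R xs t)"
    and "\<And>t. t \<ge> 1 \<Longrightarrow> x t = metric_proj C (xt t - \<eta> *\<^sub>R xh t)"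
    and "T \<ge> 1"
    and "\<And>t. 1 \<le> t \<Longrightarrow> t \<le> T \<Longrightarrow> z t \<in> C"
  shows "(\<Sum>t=1..T. \<phi> t (x t)) - (\<Sum>t=1..T. \<phi> t (z t)) \<le>
    ereal (diameter C ^ 2 / (2 * \<eta>)
      + diameter C / \<eta> * (\<Sum>t=2..T. norm (z t - z (t - 1)))
      + \<eta> / 2 * (\<Sum>t=1..T. (norm (xs t - xh t))^2)
      - 1 / (2 * \<eta>) * (\<Sum>t=1..T. (norm (x t - xt t))^2))"
proof -
  note proj = metric_proj_in[OF assms(1-3)] metric_proj_variational_ineq[OF assms(1-3)]
  have xt_in: "xt t \<in> C" if "t \<ge> 1" for t
    using that by (induction t rule: dec_induct) (use assms(8,10) proj in auto)
  have "(\<Sum>t=1..T. inner (xs t) (x t - z t)) \<le> diameter C ^ 2 / (2 * \<eta>)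
      + diameter C / \<eta> * (\<Sum>t=2..T. norm (z t - z (t - 1)))
      + \<eta> / 2 * (\<Sum>t=1..T. (norm (xs t - xh t))^2)
      - 1 / (2 * \<eta>) * (\<Sum>t=1..T. (norm (x t - xt t))^2)"
  proof (rule sum_le_of_projected_steps[OF assms(7,4) xt_in assms(13)])
    fix t assume t: "1 \<le> t" "t \<le> T"
    show "\<eta> * inner (xs t) (x t - z t) \<le> ((norm (xt t - z t))\<^sup>2 - (norm (xt (Suc t) - z t))\<^sup>2) / 2
        + \<eta>\<^sup>2 / 2 * (norm (xs t - xh t))\<^sup>2 - (norm (x t - xt t))\<^sup>2 / 2"
      using assms(10,11)[OF t(1)] assms(13)[OF t] xt_in[of "Suc t"]
      by (intro optimistic_step_ineq) (auto intro: proj)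
  qed
  with sum_subdiff_linearization[of "{1..T}" xs \<phi> x z] assms(9) show ?thesis
    by (auto intro: order_trans)
qed

end
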